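(* Suppose that $\|\mathcal{P}_{T_i}\mathcal{A}_{i,p}^*\mathcal{A}_{i,p}\boldsymbol{S}_{i,p}\mathcal{P}_{T_i}-\mathcal{P}_{T_i}\|\le\frac14$ for all $1\le i\le r$, $1\le p\le P$, and $\|\mathcal{P}_{T_j}\mathcal{A}_{j,p}^*\mathcal{A}_{k,p}\boldsymbol{S}_{k,p}\mathcal{P}_{T_k}\|\le\frac1{4r}$ for all $1\le j\ne k\le r$, $1\le p\le P$. Then the golfing scheme defined in the context generates a sequence $\{\boldsymbol{Y}_{i,p}\}_{p=1}^P$ such that $$\|\boldsymbol{W}_{i,p}\|_F=\|\mathcal{P}_{T_i}(\boldsymbol{Y}_{i,p})-\boldsymbol{h}_i\boldsymbol{x}_i^*\|_F\le2^{-p}$$ holds simultaneously for all $1\le i\le r$ (and $1\le p\le P$). In particular, if $P\ge\log_2(5r\gamma)$, then $\|\mathcal{P}_{T_i}(\boldsymbol{Y}_i)-\boldsymbol{h}_i\boldsymbol{x}_i^*\|_F\le\frac1{5r\gamma}$, where $\boldsymbol{Y}_i:=\boldsymbol{Y}_{i,P}$.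
   Context: $\boldsymbol{h}_i\in\mathbb{R}^{K_i}$, $\boldsymbol{x}_i\in\mathbb{R}^{N_i}$ real unit-norm (standing assumption); $\boldsymbol{b}_{i,l}\in\mathbb{C}^{K_i}$, $\boldsymbol{a}_{i,l}\in\mathbb{R}^{N_i}$ given vectors. Partition $\{\Gamma_p\}_{p=1}^P$ of $\{1,\dots,L\}$ with $|\Gamma_p|=Q$; $\boldsymbol{T}_{i,p}=\sum_{l\in\Gamma_p}\boldsymbol{b}_{i,l}\boldsymbol{b}_{i,l}^*$ invertible, $\boldsymbol{S}_{i,p}=\boldsymbol{T}_{i,p}^{-1}$ (acting as $\boldsymbol{Z}\mapsto\boldsymbol{S}_{i,p}\boldsymbol{Z}$). $\mathcal{A}_{i,p}(\boldsymbol{Z})=\{\boldsymbol{b}_{i,l}^*\boldsymbol{Z}\boldsymbol{a}_{i,l}\}_{l\in\Gamma_p}$, $\mathcal{A}_{i,p}^*(\boldsymbol{z})=\sum_{l\in\Gamma_p}z_l\boldsymbol{b}_{i,l}\boldsymbol{a}_{i,l}^*$; $\mathcal{P}_{T_i}(\boldsymbol{Z})=\boldsymbol{h}_i\boldsymbol{h}_i^*\boldsymbol{Z}+(\boldsymbol{I}-\boldsymbol{h}_i\boldsymbol{h}_i^* )\boldsymbol{Z}\boldsymbol{x}_i\boldsymbol{x}_i^*$. Operator norms w.r.t. Frobenius norms. $\gamma>0$ is an upper bound on the operator norms $\|\mathcal{A}_i\|$ of $\mathcal{A}_i(\boldsymbol{Z})=\{\boldsymbol{b}_{i,l}^*\boldsymbol{Z}\boldsymbol{a}_{i,l}\}_{l=1}^L$.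 Golfing scheme: $\boldsymbol{Y}_{i,0}=\boldsymbol{0}$; for $p=1,\dots,P$: $\boldsymbol{\lambda}_{p-1}:=\sum_{j=1}^r\mathcal{A}_{j,p}\big(\boldsymbol{S}_{j,p}(\boldsymbol{h}_j\boldsymbol{x}_j^*-\mathcal{P}_{T_j}(\boldsymbol{Y}_{j,p-1}))\big)$ and $\boldsymbol{Y}_{i,p}:=\boldsymbol{Y}_{i,p-1}+\mathcal{A}_{i,p}^*(\boldsymbol{\lambda}_{p-1})$; $\boldsymbol{W}_{i,p}:=\boldsymbol{h}_i\boldsymbol{x}_i^*-\mathcal{P}_{T_i}(\boldsymbol{Y}_{i,p})$. *)

theory Defs
  imports "Jordan_Normal_Form.Matrix"
begin

definition frob :: "complex mat \<Rightarrow> real" where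
  "frob Z = sqrt (\<Sum>k<dim_row Z. \<Sum>n<dim_col Z. (cmod (Z $$ (k, n)))\<^sup>2)"

definition rnorm :: "real vec \<Rightarrow> real" where
  "rnorm v = sqrt (\<Sum>k<dim_vec v. (v $ k)\<^sup>2)"

definition cnorm_on :: "nat set \<Rightarrow> (nat \<Rightarrow> complex) \<Rightarrow> real" where
  "cnorm_on I z = sqrt (\<Sum>l\<in>I. (cmod (z l))\<^sup>2)"

definition op_norm :: "nat \<Rightarrow> nat \<Rightarrow> ('b \<Rightarrow> real) \<Rightarrow> (complex mat \<Rightarrow> 'b) \<Rightarrow> real" where
  "op_norm m n nrm F = Sup ((\<lambda>Z. nrm (F Z)) ` {Z \<in> carrier_mat m n. frob Z \<le> 1})"

definition cvec :: "real vec \<Rightarrow> complex vec" where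
  "cvec v = map_vec complex_of_real v"

definition outer :: "complex vec \<Rightarrow> complex vec \<Rightarrow> complex mat" where
  "outer u v = mat (dim_vec u) (dim_vec v) (\<lambda>(k, n). u $ k * cnj (v $ n))"

definition bform :: "complex vec \<Rightarrow> complex mat \<Rightarrow> complex vec \<Rightarrow> complex" where
  "bform b Z a = conjugate b \<bullet> (Z *\<^sub>v a)"

definition PT :: "real vec \<Rightarrow> real vec \<Rightarrow> complex mat \<Rightarrow> complex mat" where
  "PT h x Z = outer (cvec h) (cvec h) * Z
     + (1\<^sub>m (dim_vec h) - outer (cvec h) (cvec h)) * Z * outer (cvec x) (cvec x)"

definition Aop :: "(nat \<Rightarrow> nat \<Rightarrow> complex vec) \<Rightarrow> (nat \<Rightarrow> nat \<Rightarrow> real vec) \<Rightarrow> nat set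
    \<Rightarrow> nat \<Rightarrow> complex mat \<Rightarrow> (nat \<Rightarrow> complex)" where
  "Aop b a G i Z = (\<lambda>l. if l \<in> G then bform (b i l) Z (cvec (a i l)) else 0)"

definition Aadj :: "(nat \<Rightarrow> nat) \<Rightarrow> (nat \<Rightarrow> nat) \<Rightarrow> (nat \<Rightarrow> nat \<Rightarrow> complex vec)
    \<Rightarrow> (nat \<Rightarrow> nat \<Rightarrow> real vec) \<Rightarrow> nat set \<Rightarrow> nat \<Rightarrow> (nat \<Rightarrow> complex) \<Rightarrow> complex mat" where
  "Aadj K N b a G i z = mat (K i) (N i) (\<lambda>(k, n). \<Sum>l\<in>G. z l * (outer (b i l) (cvec (a i l)) $$ (k, n)))"

definition Tmat :: "(nat \<Rightarrow> nat) \<Rightarrow> (nat \<Rightarrow> nat \<Rightarrow> complex vec) \<Rightarrow> nat set \<Rightarrow> nat \<Rightarrow> complex mat" where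
  "Tmat K b G i = mat (K i) (K i) (\<lambda>(k, n). \<Sum>l\<in>G. outer (b i l) (b i l) $$ (k, n))"

text \<open>Index p of the partition starts at 1.
  lambda_{p-1} = sum_{j=1}^r A_{j,p}(S_{j,p}(h_j x_j^* - P_{T_j}(Y_{j,p-1}))),
  Y_{i,p} = Y_{i,p-1} + A_{i,p}^*(lambda_{p-1}).\<close>
primrec golf :: "nat \<Rightarrow> (nat \<Rightarrow> nat) \<Rightarrow> (nat \<Rightarrow> nat) \<Rightarrow> (nat \<Rightarrow> real vec) \<Rightarrow> (nat \<Rightarrow> real vec)
    \<Rightarrow> (nat \<Rightarrow> nat \<Rightarrow> complex vec) \<Rightarrow> (nat \<Rightarrow> nat \<Rightarrow> real vec) \<Rightarrow> (nat \<Rightarrow> nat set)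
    \<Rightarrow> (nat \<Rightarrow> nat \<Rightarrow> complex mat) \<Rightarrow> nat \<Rightarrow> nat \<Rightarrow> complex mat" where
  "golf r K N h x b a \<Gamma> S 0 = (\<lambda>i. 0\<^sub>m (K i) (N i))"
| "golf r K N h x b a \<Gamma> S (Suc p) =
    (let Y = golf r K N h x b a \<Gamma> S p;
         lam = (\<lambda>l. \<Sum>j\<in>{1..r}. Aop b a (\<Gamma> (Suc p)) j
                  (S j (Suc p) * (outer (cvec (h j)) (cvec (x j)) - PT (h j) (x j) (Y j))) l)
     in (\<lambda>i. Y i + Aadj K N b a (\<Gamma> (Suc p)) i lam))"

end

theory Submission
  imports Defs "HOL-Analysis.L2_Norm"
begin

text \<open>The residual W_{i,p} = h_i x_i^* - P_{T_i}(Y_{i,p}) lies in the tangent space T_i, so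
  one step of the scheme reads
  W_{i,p} = (P_{T_i} - P_{T_i} A_{i,p}^* A_{i,p} S_{i,p} P_{T_i}) W_{i,p-1}
            - sum_{j \<noteq> i} P_{T_i} A_{i,p}^* A_{j,p} S_{j,p} P_{T_j} W_{j,p-1}.
  The hypotheses bound the first operator by 1/4 and each of the r - 1 cross terms by 1/(4r),
  so the largest residual norm at least halves in every step, starting from
  the norm 1 of h_i x_i^*.\<close>

section \<open>The Frobenius norm\<close>

lemma frob_eq_L2_set:
  "frob Z = L2_set (\<lambda>(k, n). cmod (Z $$ (k, n))) ({..<dim_row Z} \<times> {..<dim_col Z})"
  unfolding frob_def L2_set_def by (simp add: sum.cartesian_product case_prod_beta)

lemma frob_nonneg: "frob Z \<ge> 0"
  unfolding frob_eq_L2_set by simp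

lemma cmod_index_le_frob: "k < dim_row Z \<Longrightarrow> n < dim_col Z \<Longrightarrow> cmod (Z $$ (k, n)) \<le> frob Z"
  unfolding frob_eq_L2_set
  using member_le_L2_set[of "{..<dim_row Z} \<times> {..<dim_col Z}" "(k, n)" "\<lambda>(k, n). cmod (Z $$ (k, n))"]
  by simp

lemma frob_zero_mat [simp]: "frob (0\<^sub>m m n) = 0"
  unfolding frob_def by simp

lemma frob_eq_0_imp_zero_mat:
  assumes Z: "Z \<in> carrier_mat m n" and "frob Z = 0"
  shows "Z = 0\<^sub>m m n"
proof (rule eq_matI)
  fix k l assume "k < dim_row (0\<^sub>m m n)" "l < dim_col (0\<^sub>m m n)"
  then show "Z $$ (k, l) = 0\<^sub>m m n $$ (k, l)"
    using cmod_index_le_frob[of k Z l] Z \<open>frob Z = 0\<close> by simp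
qed (use Z in auto)

lemma frob_smult_mat: "frob (c \<cdot>\<^sub>m A) = cmod c * frob A"
proof -
  have "frob (c \<cdot>\<^sub>m A)
      = L2_set (\<lambda>kn. cmod c * (\<lambda>(k, n). cmod (A $$ (k, n))) kn) ({..<dim_row A} \<times> {..<dim_col A})"
    unfolding frob_eq_L2_set by (intro L2_set_cong) (auto simp: norm_mult)
  also have "\<dots> = cmod c * frob A"
    unfolding frob_eq_L2_set by (simp add: L2_set_right_distrib)
  finally show ?thesis .
qed

lemma frob_add_le:
  assumes "A \<in> carrier_mat m n" "B \<in> carrier_mat m n"
  shows "frob (A + B) \<le> frob A + frob B"
proof -
  let ?a = "\<lambda>(k, l). cmod (A $$ (k, l))" and ?b = "\<lambda>(k, l). cmod (B $$ (k, l))"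
  have "frob (A + B) = L2_set (\<lambda>(k, l). cmod (A $$ (k, l) + B $$ (k, l))) ({..<m} \<times> {..<n})"
    unfolding frob_eq_L2_set using assms by (intro L2_set_cong) auto
  also have "\<dots> \<le> L2_set (\<lambda>kl. ?a kl + ?b kl) ({..<m} \<times> {..<n})"
    by (intro L2_set_mono) (auto simp: norm_triangle_ineq)
  also have "\<dots> \<le> frob A + frob B"
    unfolding frob_eq_L2_set using assms L2_set_triangle_ineq[of ?a ?b] by simp
  finally show ?thesis .
qed

lemma frob_diff_le:
  assumes "A \<in> carrier_mat m n" "B \<in> carrier_mat m n"
  shows "frob (A - B) \<le> frob A + frob B"
proof -
  have "A - B = A + (-1) \<cdot>\<^sub>m B" using assms by (intro eq_matI) auto
  then show ?thesis using frob_add_le[OF assms(1), of "(-1) \<cdot>\<^sub>m B"] assms by (simp add: frob_smult_mat)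
qed

lemma frob_minus_commute:
  assumes "A \<in> carrier_mat m n" "B \<in> carrier_mat m n"
  shows "frob (A - B) = frob (B - A)"
  unfolding frob_def using assms by (simp add: norm_minus_commute)

section \<open>Linear maps between matrix spaces\<close>

definition mat_linear :: "nat \<Rightarrow> nat \<Rightarrow> nat \<Rightarrow> nat \<Rightarrow> (complex mat \<Rightarrow> complex mat) \<Rightarrow> bool" where
  "mat_linear m n m' n' F \<longleftrightarrow>
     (\<forall>A \<in> carrier_mat m n. F A \<in> carrier_mat m' n') \<and>
     (\<forall>A \<in> carrier_mat m n. \<forall>B \<in> carrier_mat m n. F (A + B) = F A + F B) \<and>
     (\<forall>A \<in> carrier_mat m n. \<forall>c. F (c \<cdot>\<^sub>m A) = c \<cdot>\<^sub>m F A)"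

lemma mat_linearI:
  assumes "\<And>A. A \<in> carrier_mat m n \<Longrightarrow> F A \<in> carrier_mat m' n'"
    and "\<And>A B. A \<in> carrier_mat m n \<Longrightarrow> B \<in> carrier_mat m n \<Longrightarrow> F (A + B) = F A + F B"
    and "\<And>A c. A \<in> carrier_mat m n \<Longrightarrow> F (c \<cdot>\<^sub>m A) = c \<cdot>\<^sub>m F A"
  shows "mat_linear m n m' n' F"
  using assms unfolding mat_linear_def by blast

lemma
  assumes "mat_linear m n m' n' F" and A: "A \<in> carrier_mat m n"
  shows mat_linear_carrier: "F A \<in> carrier_mat m' n'"
    and mat_linear_add: "B \<in> carrier_mat m n \<Longrightarrow> F (A + B) = F A + F B"
    and mat_linear_smult: "F (c \<cdot>\<^sub>m A) = c \<cdot>\<^sub>m F A"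
  using assms unfolding mat_linear_def by blast+

lemma mat_linear_diff:
  assumes F: "mat_linear m n m' n' F" and A: "A \<in> carrier_mat m n" and B: "B \<in> carrier_mat m n"
  shows "F (A - B) = F A - F B"
proof -
  have "A - B = A + (-1) \<cdot>\<^sub>m B" using A B by (intro eq_matI) auto
  then have "F (A - B) = F A + (-1) \<cdot>\<^sub>m F B"
    using mat_linear_add[OF F A, of "(-1) \<cdot>\<^sub>m B"] mat_linear_smult[OF F B] B by simp
  also have "\<dots> = F A - F B"
    using mat_linear_carrier[OF F A] mat_linear_carrier[OF F B] by (intro eq_matI) auto
  finally show ?thesis .
qed

lemma mat_linear_zero:
  assumes "mat_linear m n m' n' F"
  shows "F (0\<^sub>m m n) = 0\<^sub>m m' n'"
proof -
  have "F (0\<^sub>m m n) = F (0 \<cdot>\<^sub>m 0\<^sub>m m n)" by simp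
  also have "\<dots> = 0 \<cdot>\<^sub>m F (0\<^sub>m m n)" by (rule mat_linear_smult[OF assms]) simp
  also have "\<dots> = 0\<^sub>m m' n'" using mat_linear_carrier[OF assms, of "0\<^sub>m m n"] by (intro eq_matI) auto
  finally show ?thesis .
qed

lemma mat_linear_mult_left:
  "S \<in> carrier_mat m' m \<Longrightarrow> mat_linear m n m' n (\<lambda>Z. S * Z)"
  by (intro mat_linearI) (auto simp: mult_add_distrib_mat mult_smult_distrib)

lemma mat_linear_mult_right:
  "X \<in> carrier_mat n n' \<Longrightarrow> mat_linear m n m n' (\<lambda>Z. Z * X)"
  by (intro mat_linearI) (auto simp: add_mult_distrib_mat mult_smult_assoc_mat)

lemma mat_linear_comp:
  "mat_linear m' n' m'' n'' G \<Longrightarrow> mat_linear m n m' n' F \<Longrightarrow> mat_linear m n m'' n'' (\<lambda>Z. G (F Z))"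
  by (intro mat_linearI) (simp_all add: mat_linear_carrier mat_linear_add mat_linear_smult)

lemma mat_linear_plus:
  assumes F: "mat_linear m n m' n' F" and G: "mat_linear m n m' n' G"
  shows "mat_linear m n m' n' (\<lambda>Z. F Z + G Z)"
proof (rule mat_linearI)
  fix A B :: "complex mat" and c assume A: "A \<in> carrier_mat m n"
  note FA = mat_linear_carrier[OF F A] and GA = mat_linear_carrier[OF G A]
  show "F A + G A \<in> carrier_mat m' n'" using FA GA by simp
  show "F (c \<cdot>\<^sub>m A) + G (c \<cdot>\<^sub>m A) = c \<cdot>\<^sub>m (F A + G A)"
    unfolding mat_linear_smult[OF F A] mat_linear_smult[OF G A]
    using FA GA by (intro eq_matI) (auto simp: ring_distribs)
  assume B: "B \<in> carrier_mat m n"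
  note FB = mat_linear_carrier[OF F B] and GB = mat_linear_carrier[OF G B]
  show "F (A + B) + G (A + B) = F A + G A + (F B + G B)"
    unfolding mat_linear_add[OF F A B] mat_linear_add[OF G A B]
    using FA GA FB GB by (intro eq_matI) auto
qed

lemma mat_linear_minus:
  assumes F: "mat_linear m n m' n' F" and G: "mat_linear m n m' n' G"
  shows "mat_linear m n m' n' (\<lambda>Z. F Z - G Z)"
proof (rule mat_linearI)
  fix A B :: "complex mat" and c assume A: "A \<in> carrier_mat m n"
  note FA = mat_linear_carrier[OF F A] and GA = mat_linear_carrier[OF G A]
  show "F A - G A \<in> carrier_mat m' n'" using FA GA by (simp add: minus_carrier_mat)
  show "F (c \<cdot>\<^sub>m A) - G (c \<cdot>\<^sub>m A) = c \<cdot>\<^sub>m (F A - G A)"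
    unfolding mat_linear_smult[OF F A] mat_linear_smult[OF G A]
    using FA GA by (intro eq_matI) (auto simp: ring_distribs)
  assume B: "B \<in> carrier_mat m n"
  note FB = mat_linear_carrier[OF F B] and GB = mat_linear_carrier[OF G B]
  show "F (A + B) - G (A + B) = F A - G A + (F B - G B)"
    unfolding mat_linear_add[OF F A B] mat_linear_add[OF G A B]
    using FA GA FB GB by (intro eq_matI) auto
qed

text \<open>In finite dimension a linear map is bounded; the constant is read off the matrix units.\<close>

lemma mat_linear_frob_bounded:
  assumes F: "mat_linear m n m' n' F"
  shows "\<exists>C\<ge>0. \<forall>Z\<in>carrier_mat m n. frob (F Z) \<le> C * frob Z"
proof -
  define I where "I = {..<m} \<times> {..<n}"
  define E where "E ij = mat m n (\<lambda>kl. if kl = ij then 1 else (0::complex))" for ij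
  have E: "E ij \<in> carrier_mat m n" for ij unfolding E_def by simp
  define C where "C = (\<Sum>ij\<in>I. frob (F (E ij)))"
  have "frob (F Z) \<le> C * frob Z" if Z: "Z \<in> carrier_mat m n" for Z
  proof -
    define ZJ where "ZJ J = mat m n (\<lambda>kl. if kl \<in> J then Z $$ kl else 0)" for J
    have ZJ: "ZJ J \<in> carrier_mat m n" for J unfolding ZJ_def by simp
    have partial: "frob (F (ZJ J)) \<le> (\<Sum>ij\<in>J. cmod (Z $$ ij) * frob (F (E ij)))" if "finite J" for J
      using that
    proof (induction J rule: finite_induct)
      case empty
      have "ZJ {} = 0\<^sub>m m n" unfolding ZJ_def by (intro eq_matI) auto
      then show ?case using mat_linear_zero[OF F] by simp
    next
      case (insert ij J)
      have "ZJ (insert ij J) = ZJ J + (Z $$ ij) \<cdot>\<^sub>m E ij"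
        unfolding ZJ_def E_def using insert(2) by (intro eq_matI) auto
      then have "F (ZJ (insert ij J)) = F (ZJ J) + (Z $$ ij) \<cdot>\<^sub>m F (E ij)"
        using mat_linear_add[OF F ZJ] mat_linear_smult[OF F E] E by simp
      then have "frob (F (ZJ (insert ij J))) \<le> frob (F (ZJ J)) + cmod (Z $$ ij) * frob (F (E ij))"
        using frob_add_le[OF mat_linear_carrier[OF F ZJ], of "(Z $$ ij) \<cdot>\<^sub>m F (E ij)"]
          mat_linear_carrier[OF F E] by (simp add: frob_smult_mat)
      then show ?case using insert by simp
    qed
    have "ZJ I = Z" unfolding ZJ_def I_def using Z by (intro eq_matI) auto
    then have "frob (F Z) \<le> (\<Sum>ij\<in>I. cmod (Z $$ ij) * frob (F (E ij)))"
      using partial[of I] unfolding I_def by simp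
    also have "\<dots> \<le> (\<Sum>ij\<in>I. frob Z * frob (F (E ij)))"
      using Z by (intro sum_mono mult_right_mono frob_nonneg)
        (auto simp: I_def intro!: cmod_index_le_frob)
    also have "\<dots> = C * frob Z" unfolding C_def by (simp add: sum_distrib_left mult.commute)
    finally show ?thesis .
  qed
  moreover have "C \<ge> 0" unfolding C_def by (intro sum_nonneg frob_nonneg)
  ultimately show ?thesis by blast
qed

lemma frob_le_op_norm:
  assumes F: "mat_linear m n m' n' F" and Z: "Z \<in> carrier_mat m n"
  shows "frob (F Z) \<le> op_norm m n frob F * frob Z"
proof (cases "frob Z = 0")
  case True
  then show ?thesis
    using frob_eq_0_imp_zero_mat[OF Z] mat_linear_zero[OF F] by simp
next
  case False
  then have pos: "frob Z > 0" using frob_nonneg[of Z] by linarith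
  obtain C where "C \<ge> 0" and C: "\<forall>Z\<in>carrier_mat m n. frob (F Z) \<le> C * frob Z"
    using mat_linear_frob_bounded[OF F] by blast
  let ?X = "(\<lambda>Z. frob (F Z)) ` {Z \<in> carrier_mat m n. frob Z \<le> 1}"
  have "bdd_above ?X"
  proof (rule bdd_aboveI)
    fix y assume "y \<in> ?X"
    then obtain Z where "Z \<in> carrier_mat m n" "frob Z \<le> 1" "y = frob (F Z)" by auto
    then show "y \<le> C" using C \<open>C \<ge> 0\<close> by (metis mult_left_le order_trans)
  qed
  define Z' where "Z' = complex_of_real (1 / frob Z) \<cdot>\<^sub>m Z"
  have "Z' \<in> carrier_mat m n" "frob Z' = 1"
    unfolding Z'_def using Z pos by (simp_all add: frob_smult_mat norm_divide)
  then have "frob (F Z') \<le> op_norm m n frob F"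
    unfolding op_norm_def using \<open>bdd_above ?X\<close> by (intro cSup_upper) auto
  moreover have "frob (F Z') = frob (F Z) / frob Z"
    unfolding Z'_def mat_linear_smult[OF F Z] frob_smult_mat using pos by (simp add: norm_divide)
  ultimately show ?thesis using pos by (simp add: divide_le_eq)
qed

section \<open>The tangent-space projection\<close>

lemma one_smult_mat [simp]: "(1::complex) \<cdot>\<^sub>m A = A"
  by (intro eq_matI) auto

lemma dim_cvec [simp]: "dim_vec (cvec v) = dim_vec v"
  unfolding cvec_def by simp

lemma index_cvec [simp]: "i < dim_vec v \<Longrightarrow> cvec v $ i = complex_of_real (v $ i)"
  unfolding cvec_def by simp

lemma outer_carrier_mat [simp]: "outer u v \<in> carrier_mat (dim_vec u) (dim_vec v)"
  unfolding outer_def by simp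

lemma outer_cvec_carrier_mat [simp]: "outer (cvec u) (cvec v) \<in> carrier_mat (dim_vec u) (dim_vec v)"
  using outer_carrier_mat[of "cvec u" "cvec v"] by simp

lemma dim_outer [simp]: "dim_row (outer u v) = dim_vec u" "dim_col (outer u v) = dim_vec v"
  unfolding outer_def by simp_all

lemma index_outer: "i < dim_vec u \<Longrightarrow> j < dim_vec v \<Longrightarrow> outer u v $$ (i, j) = u $ i * cnj (v $ j)"
  unfolding outer_def by simp

lemma outer_mult_outer:
  assumes "dim_vec v = dim_vec w"
  shows "outer u v * outer w z = (\<Sum>n<dim_vec v. cnj (v $ n) * w $ n) \<cdot>\<^sub>m outer u z"
  using assms
  by (intro eq_matI) (auto simp: index_outer scalar_prod_def sum_distrib_left sum_distrib_right
      atLeast0LessThan mult_ac intro!: sum.cong)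

lemma sum_squares_eq_1_if_rnorm_1: "rnorm v = 1 \<Longrightarrow> (\<Sum>n<dim_vec v. (v $ n)\<^sup>2) = 1"
  unfolding rnorm_def by (metis real_sqrt_eq_1_iff)

lemma inner_cvec_self:
  assumes "rnorm v = 1"
  shows "(\<Sum>n<dim_vec v. cnj (cvec v $ n) * cvec v $ n) = 1"
proof -
  have "(\<Sum>n<dim_vec v. cnj (cvec v $ n) * cvec v $ n) = (\<Sum>n<dim_vec v. complex_of_real ((v $ n)\<^sup>2))"
    by (intro sum.cong) (auto simp: power2_eq_square)
  also have "\<dots> = 1"
    using sum_squares_eq_1_if_rnorm_1[OF assms] by (metis of_real_1 of_real_sum)
  finally show ?thesis .
qed

lemma outer_cvec_mult_outer_cvec:
  assumes "rnorm v = 1"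
  shows "outer u (cvec v) * outer (cvec v) w = outer u w"
  using outer_mult_outer[of "cvec v" "cvec v" u w] inner_cvec_self[OF assms] by simp

lemma frob_outer_cvec:
  assumes "rnorm h = 1" "rnorm x = 1"
  shows "frob (outer (cvec h) (cvec x)) = 1"
proof -
  have "(\<Sum>k<dim_vec h. \<Sum>n<dim_vec x. (cmod (outer (cvec h) (cvec x) $$ (k, n)))\<^sup>2)
      = (\<Sum>k<dim_vec h. (h $ k)\<^sup>2) * (\<Sum>n<dim_vec x. (x $ n)\<^sup>2)"
    by (simp add: index_outer norm_mult power_mult_distrib sum_product)
  then show ?thesis
    unfolding frob_def using assms by (simp add: sum_squares_eq_1_if_rnorm_1)
qed

lemma idempotent_complement_mat:
  fixes H :: "'a :: ring_1 mat"
  assumes H: "H \<in> carrier_mat k k" and HH: "H * H = H"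
  shows "H * (1\<^sub>m k - H) = 0\<^sub>m k k" and "(1\<^sub>m k - H) * H = 0\<^sub>m k k"
    and "(1\<^sub>m k - H) * (1\<^sub>m k - H) = 1\<^sub>m k - H"
proof -
  show HG: "H * (1\<^sub>m k - H) = 0\<^sub>m k k"
    using H HH by (simp add: mult_minus_distrib_mat[OF H one_carrier_mat H])
  show GH: "(1\<^sub>m k - H) * H = 0\<^sub>m k k"
    using H HH by (simp add: minus_mult_distrib_mat[OF one_carrier_mat H H])
  have "(1\<^sub>m k - H) * (1\<^sub>m k - H) = 1\<^sub>m k - H - H * (1\<^sub>m k - H)"
    using minus_mult_distrib_mat[OF one_carrier_mat H minus_carrier_mat[OF H]] H by simp
  then show "(1\<^sub>m k - H) * (1\<^sub>m k - H) = 1\<^sub>m k - H"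
    unfolding HG using H by (intro eq_matI) auto
qed

lemma PT_eq:
  "PT h x = (\<lambda>Z. outer (cvec h) (cvec h) * Z
     + (1\<^sub>m (dim_vec h) - outer (cvec h) (cvec h)) * Z * outer (cvec x) (cvec x))"
  unfolding PT_def by (rule ext) simp

lemma mat_linear_PT: "mat_linear (dim_vec h) (dim_vec x) (dim_vec h) (dim_vec x) (PT h x)"
  unfolding PT_eq
  by (intro mat_linear_plus mat_linear_mult_left
      mat_linear_comp[OF mat_linear_mult_right mat_linear_mult_left]) (auto simp: minus_carrier_mat)

lemma PT_idem:
  assumes "rnorm h = 1" "rnorm x = 1" and Z: "Z \<in> carrier_mat (dim_vec h) (dim_vec x)"
  shows "PT h x (PT h x Z) = PT h x Z"
proof -
  define H where "H = outer (cvec h) (cvec h)"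
  define G where "G = 1\<^sub>m (dim_vec h) - H"
  define X where "X = outer (cvec x) (cvec x)"
  have H: "H \<in> carrier_mat (dim_vec h) (dim_vec h)" and X: "X \<in> carrier_mat (dim_vec x) (dim_vec x)"
    unfolding H_def X_def by simp_all
  have G: "G \<in> carrier_mat (dim_vec h) (dim_vec h)" unfolding G_def using H by (simp add: minus_carrier_mat)
  have HH: "H * H = H" and XX: "X * X = X"
    unfolding H_def X_def using assms by (simp_all add: outer_cvec_mult_outer_cvec)
  note compl = idempotent_complement_mat[OF H HH, folded G_def]
  have HZ: "H * Z \<in> carrier_mat (dim_vec h) (dim_vec x)" and GZX: "G * Z * X \<in> carrier_mat (dim_vec h) (dim_vec x)"
    using H G X Z by simp_all
  have "H * (G * Z * X) = H * G * Z * X"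
    using assoc_mult_mat[OF H G Z] assoc_mult_mat[OF H mult_carrier_mat[OF G Z] X] by simp
  also have "\<dots> = 0\<^sub>m (dim_vec h) (dim_vec x)" using compl(1) Z X by simp
  finally have HGZX: "H * (G * Z * X) = 0\<^sub>m (dim_vec h) (dim_vec x)" .
  have "H * (H * Z + G * Z * X) = H * (H * Z) + H * (G * Z * X)"
    using H HZ GZX by (rule mult_add_distrib_mat)
  also have "\<dots> = H * Z"
    unfolding HGZX using assoc_mult_mat[OF H H Z] HH HZ by simp
  finally have part_H: "H * (H * Z + G * Z * X) = H * Z" .
  have "G * (H * Z + G * Z * X) = G * (H * Z) + G * (G * Z * X)"
    using G HZ GZX by (rule mult_add_distrib_mat)
  also have "G * (H * Z) = 0\<^sub>m (dim_vec h) (dim_vec x)"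
    using assoc_mult_mat[OF G H Z] compl(2) Z by simp
  also have "G * (G * Z * X) = G * Z * X"
    using assoc_mult_mat[OF G G Z] assoc_mult_mat[OF G mult_carrier_mat[OF G Z] X] compl(3) by simp
  also have "0\<^sub>m (dim_vec h) (dim_vec x) + G * Z * X = G * Z * X" using GZX by simp
  finally have "G * (H * Z + G * Z * X) * X = G * Z * X * X" by simp
  also have "\<dots> = G * Z * X" using assoc_mult_mat[OF mult_carrier_mat[OF G Z] X X] XX by simp
  finally show ?thesis
    unfolding PT_def H_def[symmetric] X_def[symmetric] G_def[symmetric] part_H by simp
qed

lemma PT_outer_cvec:
  assumes "rnorm h = 1" "rnorm x = 1"
  shows "PT h x (outer (cvec h) (cvec x)) = outer (cvec h) (cvec x)"
proof -
  define H where "H = outer (cvec h) (cvec h)"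
  define M where "M = outer (cvec h) (cvec x)"
  define X where "X = outer (cvec x) (cvec x)"
  have H: "H \<in> carrier_mat (dim_vec h) (dim_vec h)" and M: "M \<in> carrier_mat (dim_vec h) (dim_vec x)"
    and X: "X \<in> carrier_mat (dim_vec x) (dim_vec x)"
    unfolding H_def M_def X_def by simp_all
  have HM: "H * M = M" and MX: "M * X = M"
    unfolding H_def M_def X_def using assms by (simp_all add: outer_cvec_mult_outer_cvec)
  have G: "1\<^sub>m (dim_vec h) - H \<in> carrier_mat (dim_vec h) (dim_vec h)" using H by (simp add: minus_carrier_mat)
  have "(1\<^sub>m (dim_vec h) - H) * M * X = 1\<^sub>m (dim_vec h) * M - H * M"
    using assoc_mult_mat[OF G M X] MX minus_mult_distrib_mat[OF one_carrier_mat H M] by simp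
  also have "\<dots> = 0\<^sub>m (dim_vec h) (dim_vec x)" using HM M by (intro eq_matI) auto
  finally show ?thesis
    unfolding PT_def H_def[symmetric] X_def[symmetric] M_def[symmetric] HM using M by simp
qed

section \<open>The measurement operators\<close>

lemma bform_expand:
  assumes "dim_col Z = dim_vec v"
  shows "bform b Z v = (\<Sum>k<dim_row Z. conjugate b $ k * (\<Sum>n<dim_vec v. Z $$ (k, n) * v $ n))"
  unfolding bform_def scalar_prod_def using assms
  by (auto simp: atLeast0LessThan scalar_prod_def intro!: sum.cong)

lemma Aop_add:
  assumes "\<forall>l\<in>G. dim_vec (a i l) = n" "A \<in> carrier_mat m n" "B \<in> carrier_mat m n"
  shows "Aop b a G i (A + B) = (\<lambda>l. Aop b a G i A l + Aop b a G i B l)"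
  using assms unfolding Aop_def by (auto simp: bform_expand ring_distribs sum.distrib)

lemma Aop_smult:
  assumes "\<forall>l\<in>G. dim_vec (a i l) = n" "A \<in> carrier_mat m n"
  shows "Aop b a G i (c \<cdot>\<^sub>m A) = (\<lambda>l. c * Aop b a G i A l)"
  using assms unfolding Aop_def by (auto simp: bform_expand sum_distrib_left mult_ac)

lemma Aadj_carrier_mat [simp]: "Aadj K N b a G i z \<in> carrier_mat (K i) (N i)"
  unfolding Aadj_def by simp

lemma Aadj_add: "Aadj K N b a G i (\<lambda>l. z l + w l) = Aadj K N b a G i z + Aadj K N b a G i w"
  unfolding Aadj_def by (intro eq_matI) (auto simp: ring_distribs sum.distrib)

lemma Aadj_smult: "Aadj K N b a G i (\<lambda>l. c * z l) = c \<cdot>\<^sub>m Aadj K N b a G i z"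
  unfolding Aadj_def by (intro eq_matI) (auto simp: sum_distrib_left mult_ac)

lemma Aadj_zero: "Aadj K N b a G i (\<lambda>l. 0) = 0\<^sub>m (K i) (N i)"
  unfolding Aadj_def by (intro eq_matI) auto

lemma mat_linear_Aadj_Aop:
  assumes "\<forall>l\<in>G. dim_vec (a k l) = n"
  shows "mat_linear m n (K i) (N i) (\<lambda>Z. Aadj K N b a G i (Aop b a G k Z))"
proof (rule mat_linearI)
  fix A B :: "complex mat" and c assume A: "A \<in> carrier_mat m n"
  show "Aadj K N b a G i (Aop b a G k (c \<cdot>\<^sub>m A)) = c \<cdot>\<^sub>m Aadj K N b a G i (Aop b a G k A)"
    unfolding Aop_smult[where a=a and i=k, OF assms A] by (rule Aadj_smult)
  assume B: "B \<in> carrier_mat m n"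
  show "Aadj K N b a G i (Aop b a G k (A + B))
      = Aadj K N b a G i (Aop b a G k A) + Aadj K N b a G i (Aop b a G k B)"
    unfolding Aop_add[where a=a and i=k, OF assms A B] by (rule Aadj_add)
qed simp

lemma frob_PT_Aadj_sum_le:
  assumes h: "dim_vec h = K i" and x: "dim_vec x = N i" and "finite J"
  shows "frob (PT h x (Aadj K N b a G i (\<lambda>l. \<Sum>j\<in>J. f j l)))
           \<le> (\<Sum>j\<in>J. frob (PT h x (Aadj K N b a G i (f j))))"
  using \<open>finite J\<close>
proof (induction J rule: finite_induct)
  case empty
  show ?case
    using Aadj_zero mat_linear_zero[OF mat_linear_PT, of h x] h x by simp
next
  case (insert j J)
  have A: "Aadj K N b a G i z \<in> carrier_mat (dim_vec h) (dim_vec x)" for z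
    using h x by simp
  have "PT h x (Aadj K N b a G i (\<lambda>l. \<Sum>j\<in>insert j J. f j l))
      = PT h x (Aadj K N b a G i (f j)) + PT h x (Aadj K N b a G i (\<lambda>l. \<Sum>j\<in>J. f j l))"
    using insert mat_linear_add[OF mat_linear_PT A A] by (simp add: Aadj_add)
  then have "frob (PT h x (Aadj K N b a G i (\<lambda>l. \<Sum>j\<in>insert j J. f j l)))
      \<le> frob (PT h x (Aadj K N b a G i (f j))) + frob (PT h x (Aadj K N b a G i (\<lambda>l. \<Sum>j\<in>J. f j l)))"
    using frob_add_le[OF mat_linear_carrier[OF mat_linear_PT A] mat_linear_carrier[OF mat_linear_PT A]]
    by simp
  then show ?case using insert by simp
qed

section \<open>Contraction of the golfing residuals\<close>

lemma golf_carrier_mat: "golf r K N h x b a \<Gamma> S p i \<in> carrier_mat (K i) (N i)"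
  by (induction p arbitrary: i) (auto simp: Let_def)

locale golfing_scheme =
  fixes r P :: nat and K N :: "nat \<Rightarrow> nat" and h x :: "nat \<Rightarrow> real vec"
    and b :: "nat \<Rightarrow> nat \<Rightarrow> complex vec" and a :: "nat \<Rightarrow> nat \<Rightarrow> real vec"
    and \<Gamma> :: "nat \<Rightarrow> nat set" and S :: "nat \<Rightarrow> nat \<Rightarrow> complex mat"
  assumes h_dim: "i \<in> {1..r} \<Longrightarrow> dim_vec (h i) = K i"
    and x_dim: "i \<in> {1..r} \<Longrightarrow> dim_vec (x i) = N i"
    and h_unit: "i \<in> {1..r} \<Longrightarrow> rnorm (h i) = 1"
    and x_unit: "i \<in> {1..r} \<Longrightarrow> rnorm (x i) = 1"
    and a_dim: "i \<in> {1..r} \<Longrightarrow> p \<in> {1..P} \<Longrightarrow> \<forall>l\<in>\<Gamma> p. dim_vec (a i l) = N i"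
    and S_carrier: "i \<in> {1..r} \<Longrightarrow> p \<in> {1..P} \<Longrightarrow> S i p \<in> carrier_mat (K i) (K i)"
    and diag: "i \<in> {1..r} \<Longrightarrow> p \<in> {1..P} \<Longrightarrow>
       op_norm (K i) (N i) frob
         (\<lambda>Z. PT (h i) (x i) (Aadj K N b a (\<Gamma> p) i (Aop b a (\<Gamma> p) i (S i p * PT (h i) (x i) Z)))
              - PT (h i) (x i) Z) \<le> 1 / 4"
    and offdiag: "j \<in> {1..r} \<Longrightarrow> k \<in> {1..r} \<Longrightarrow> p \<in> {1..P} \<Longrightarrow> j \<noteq> k \<Longrightarrow>
       op_norm (K k) (N k) frob
         (\<lambda>Z. PT (h j) (x j) (Aadj K N b a (\<Gamma> p) j (Aop b a (\<Gamma> p) k (S k p * PT (h k) (x k) Z))))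
         \<le> 1 / (4 * real r)"
begin

abbreviation Y :: "nat \<Rightarrow> nat \<Rightarrow> complex mat" where
  "Y \<equiv> golf r K N h x b a \<Gamma> S"

lemma Y_carrier_mat: "Y p i \<in> carrier_mat (K i) (N i)"
  by (rule golf_carrier_mat)

definition target :: "nat \<Rightarrow> complex mat" where
  "target i = outer (cvec (h i)) (cvec (x i))"

definition residual :: "nat \<Rightarrow> nat \<Rightarrow> complex mat" where
  "residual p i = target i - PT (h i) (x i) (Y p i)"

definition coupling :: "nat \<Rightarrow> nat \<Rightarrow> nat \<Rightarrow> complex mat \<Rightarrow> complex mat" where
  "coupling i j p Z = PT (h i) (x i) (Aadj K N b a (\<Gamma> p) i (Aop b a (\<Gamma> p) j (S j p * Z)))"

lemma mat_linear_PT_index: "i \<in> {1..r} \<Longrightarrow> mat_linear (K i) (N i) (K i) (N i) (PT (h i) (x i))"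
  using mat_linear_PT[of "h i" "x i"] by (simp add: h_dim x_dim)

lemma target_carrier_mat: "i \<in> {1..r} \<Longrightarrow> target i \<in> carrier_mat (K i) (N i)"
  unfolding target_def using outer_cvec_carrier_mat[of "h i" "x i"] h_dim x_dim by simp

lemma residual_carrier_mat: "i \<in> {1..r} \<Longrightarrow> residual p i \<in> carrier_mat (K i) (N i)"
  unfolding residual_def
  using target_carrier_mat mat_linear_carrier[OF mat_linear_PT_index Y_carrier_mat]
  by (simp add: minus_carrier_mat)

lemma PT_residual:
  assumes i: "i \<in> {1..r}"
  shows "PT (h i) (x i) (residual p i) = residual p i"
  unfolding residual_def
  using mat_linear_diff[OF mat_linear_PT_index[OF i] target_carrier_mat[OF i]
      mat_linear_carrier[OF mat_linear_PT_index[OF i] Y_carrier_mat]]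
    PT_outer_cvec[OF h_unit[OF i] x_unit[OF i]]
    PT_idem[OF h_unit[OF i] x_unit[OF i], of "Y p i"] Y_carrier_mat h_dim[OF i] x_dim[OF i]
  by (simp add: target_def)

lemma mat_linear_coupling:
  assumes "i \<in> {1..r}" "j \<in> {1..r}" "p \<in> {1..P}"
  shows "mat_linear (K j) (N j) (K i) (N i) (coupling i j p)"
  unfolding coupling_def[abs_def]
  by (intro mat_linear_comp[OF mat_linear_PT_index[OF assms(1)]]
      mat_linear_comp[OF mat_linear_Aadj_Aop[OF a_dim] mat_linear_mult_left[OF S_carrier]])
    (use assms in auto)

definition cross_terms :: "nat \<Rightarrow> nat \<Rightarrow> complex mat" where
  "cross_terms p i = PT (h i) (x i) (Aadj K N b a (\<Gamma> (Suc p)) i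
     (\<lambda>l. \<Sum>j\<in>{1..r} - {i}. Aop b a (\<Gamma> (Suc p)) j (S j (Suc p) * residual p j) l))"

lemma cross_terms_carrier_mat: "i \<in> {1..r} \<Longrightarrow> cross_terms p i \<in> carrier_mat (K i) (N i)"
  unfolding cross_terms_def by (rule mat_linear_carrier[OF mat_linear_PT_index]) simp_all

lemma residual_Suc:
  assumes i: "i \<in> {1..r}"
  shows "residual (Suc p) i = (residual p i - coupling i i (Suc p) (residual p i)) - cross_terms p i"
proof -
  define f where "f j = Aop b a (\<Gamma> (Suc p)) j (S j (Suc p) * residual p j)" for j
  define A1 where "A1 = Aadj K N b a (\<Gamma> (Suc p)) i (f i)"
  define A2 where "A2 = Aadj K N b a (\<Gamma> (Suc p)) i (\<lambda>l. \<Sum>j\<in>{1..r} - {i}. f j l)"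
  have A: "A1 \<in> carrier_mat (K i) (N i)" "A2 \<in> carrier_mat (K i) (N i)"
    unfolding A1_def A2_def by simp_all
  have "Y (Suc p) i = Y p i + Aadj K N b a (\<Gamma> (Suc p)) i (\<lambda>l. \<Sum>j\<in>{1..r}. f j l)"
    unfolding f_def residual_def target_def by (simp add: Let_def)
  also have "(\<lambda>l. \<Sum>j\<in>{1..r}. f j l) = (\<lambda>l. f i l + (\<Sum>j\<in>{1..r} - {i}. f j l))"
    using i by (simp add: sum.remove)
  finally have "Y (Suc p) i = Y p i + (A1 + A2)"
    unfolding A1_def A2_def by (simp add: Aadj_add)
  then have PTY: "PT (h i) (x i) (Y (Suc p) i)
      = PT (h i) (x i) (Y p i) + (PT (h i) (x i) A1 + PT (h i) (x i) A2)"
    using A Y_carrier_mat mat_linear_add[OF mat_linear_PT_index[OF i]] by simp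
  note PT_carrier = mat_linear_carrier[OF mat_linear_PT_index[OF i]]
  have "residual (Suc p) i = (residual p i - PT (h i) (x i) A1) - PT (h i) (x i) A2"
    unfolding residual_def PTY
    using target_carrier_mat[OF i] PT_carrier[OF A(1)] PT_carrier[OF A(2)] PT_carrier[OF Y_carrier_mat[of p]]
    by (intro eq_matI) auto
  moreover have "coupling i i (Suc p) (residual p i) = PT (h i) (x i) A1"
    unfolding coupling_def A1_def f_def ..
  ultimately show ?thesis unfolding cross_terms_def A2_def f_def by simp
qed

lemma frob_residual_minus_coupling_le:
  assumes i: "i \<in> {1..r}" and q: "q \<in> {1..P}"
  shows "frob (residual p i - coupling i i q (residual p i)) \<le> frob (residual p i) / 4"
proof -
  define D where "D Z = coupling i i q (PT (h i) (x i) Z) - PT (h i) (x i) Z" for Z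
  have D: "mat_linear (K i) (N i) (K i) (N i) D"
    unfolding D_def[abs_def] using assms
    by (intro mat_linear_minus mat_linear_comp[OF mat_linear_coupling] mat_linear_PT_index) auto
  have "frob (residual p i - coupling i i q (residual p i)) = frob (D (residual p i))"
    unfolding D_def PT_residual[OF i]
    using frob_minus_commute residual_carrier_mat[OF i]
      mat_linear_carrier[OF mat_linear_coupling[OF i i q] residual_carrier_mat[OF i]] by blast
  also have "\<dots> \<le> op_norm (K i) (N i) frob D * frob (residual p i)"
    using D residual_carrier_mat[OF i] by (rule frob_le_op_norm)
  also have "\<dots> \<le> 1 / 4 * frob (residual p i)"
    using diag[OF i q] frob_nonneg unfolding D_def coupling_def by (intro mult_right_mono)
  finally show ?thesis by simp
qed

lemma frob_coupling_residual_le: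
  assumes i: "i \<in> {1..r}" and j: "j \<in> {1..r}" and q: "q \<in> {1..P}" and "i \<noteq> j"
  shows "frob (coupling i j q (residual p j)) \<le> frob (residual p j) / (4 * real r)"
proof -
  define F where "F Z = coupling i j q (PT (h j) (x j) Z)" for Z
  have F: "mat_linear (K j) (N j) (K i) (N i) F"
    unfolding F_def[abs_def] using assms by (intro mat_linear_comp[OF mat_linear_coupling] mat_linear_PT_index)
  have "frob (coupling i j q (residual p j)) = frob (F (residual p j))"
    unfolding F_def PT_residual[OF j] ..
  also have "\<dots> \<le> op_norm (K j) (N j) frob F * frob (residual p j)"
    using F residual_carrier_mat[OF j] by (rule frob_le_op_norm)
  also have "\<dots> \<le> 1 / (4 * real r) * frob (residual p j)"
    using offdiag[OF i j q \<open>i \<noteq> j\<close>] frob_nonneg unfolding F_def coupling_def by (intro mult_right_mono)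
  finally show ?thesis by simp
qed

lemma frob_cross_terms_le:
  assumes q: "Suc p \<in> {1..P}" and i: "i \<in> {1..r}"
    and bound: "\<And>j. j \<in> {1..r} \<Longrightarrow> frob (residual p j) \<le> \<epsilon>"
  shows "frob (cross_terms p i) \<le> \<epsilon> / 4"
proof -
  let ?J = "{1..r} - {i}"
  have "\<epsilon> \<ge> 0" using bound[OF i] frob_nonneg order_trans by blast
  have "frob (cross_terms p i) \<le> (\<Sum>j\<in>?J. frob (coupling i j (Suc p) (residual p j)))"
    unfolding cross_terms_def coupling_def using h_dim[OF i] x_dim[OF i]
    by (intro frob_PT_Aadj_sum_le) auto
  also have "\<dots> \<le> (\<Sum>j\<in>?J. \<epsilon> / (4 * real r))"
  proof (rule sum_mono)
    fix j assume j: "j \<in> ?J"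
    then have "frob (coupling i j (Suc p) (residual p j)) \<le> frob (residual p j) / (4 * real r)"
      using frob_coupling_residual_le[OF i _ q] by auto
    also have "\<dots> \<le> \<epsilon> / (4 * real r)"
      using bound j by (intro divide_right_mono) auto
    finally show "frob (coupling i j (Suc p) (residual p j)) \<le> \<epsilon> / (4 * real r)" .
  qed
  also have "\<dots> = real (r - 1) * \<epsilon> / (4 * real r)"
    using i by simp
  also have "\<dots> \<le> \<epsilon> / 4"
    using i \<open>\<epsilon> \<ge> 0\<close> by (simp add: field_simps of_nat_diff)
  finally show ?thesis .
qed

lemma frob_residual_Suc_le:
  assumes q: "Suc p \<in> {1..P}" and i: "i \<in> {1..r}"
    and bound: "\<And>j. j \<in> {1..r} \<Longrightarrow> frob (residual p j) \<le> \<epsilon>"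
  shows "frob (residual (Suc p) i) \<le> \<epsilon> / 2"
proof -
  have "frob (residual (Suc p) i)
      \<le> frob (residual p i - coupling i i (Suc p) (residual p i)) + frob (cross_terms p i)"
    unfolding residual_Suc[OF i]
    using residual_carrier_mat[OF i, where p=p] cross_terms_carrier_mat[OF i]
      mat_linear_carrier[OF mat_linear_coupling[OF i i q] residual_carrier_mat[OF i, where p=p]]
    by (intro frob_diff_le) (auto simp: minus_carrier_mat)
  moreover have "frob (residual p i - coupling i i (Suc p) (residual p i)) \<le> \<epsilon> / 4"
    using frob_residual_minus_coupling_le[OF i q, of p] bound[OF i] by linarith
  ultimately show ?thesis using frob_cross_terms_le[OF q i bound] by linarith
qed

lemma frob_residual_commute:
  assumes i: "i \<in> {1..r}"
  shows "frob (residual p i) = frob (PT (h i) (x i) (Y p i) - target i)"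
  unfolding residual_def using frob_minus_commute target_carrier_mat[OF i]
    mat_linear_carrier[OF mat_linear_PT_index[OF i] Y_carrier_mat] by blast

lemma frob_residual_le:
  assumes "p \<le> P" and "i \<in> {1..r}"
  shows "frob (residual p i) \<le> 1 / 2 ^ p"
  using assms
proof (induction p arbitrary: i)
  case 0
  have "residual 0 i = target i"
    unfolding residual_def using mat_linear_zero[OF mat_linear_PT_index[OF 0(2)]]
      target_carrier_mat[OF 0(2)] by (intro eq_matI) auto
  then show ?case
    unfolding target_def using frob_outer_cvec h_unit[OF 0(2)] x_unit[OF 0(2)] by simp
next
  case (Suc p)
  have "frob (residual (Suc p) i) \<le> 1 / 2 ^ p / 2"
    using Suc by (intro frob_residual_Suc_le) auto
  then show ?case by simp
qed

end

theorem lemma5: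
  fixes r L P Q :: nat
    and K N :: "nat \<Rightarrow> nat"
    and h x :: "nat \<Rightarrow> real vec"
    and b :: "nat \<Rightarrow> nat \<Rightarrow> complex vec"
    and a :: "nat \<Rightarrow> nat \<Rightarrow> real vec"
    and \<Gamma> :: "nat \<Rightarrow> nat set"
    and S :: "nat \<Rightarrow> nat \<Rightarrow> complex mat"
    and \<gamma> :: real
  assumes h_dim: "\<forall>i\<in>{1..r}. dim_vec (h i) = K i"
    and x_dim: "\<forall>i\<in>{1..r}. dim_vec (x i) = N i"
    and h_unit: "\<forall>i\<in>{1..r}. rnorm (h i) = 1"
    and x_unit: "\<forall>i\<in>{1..r}. rnorm (x i) = 1"
    and b_dim: "\<forall>i\<in>{1..r}. \<forall>l\<in>{1..L}. dim_vec (b i l) = K i"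
    and a_dim: "\<forall>i\<in>{1..r}. \<forall>l\<in>{1..L}. dim_vec (a i l) = N i"
    and part_sub: "\<forall>p\<in>{1..P}. \<Gamma> p \<subseteq> {1..L}"
    and part_cover: "(\<Union>p\<in>{1..P}. \<Gamma> p) = {1..L}"
    and part_disj: "\<forall>p\<in>{1..P}. \<forall>q\<in>{1..P}. p \<noteq> q \<longrightarrow> \<Gamma> p \<inter> \<Gamma> q = {}"
    and part_card: "\<forall>p\<in>{1..P}. card (\<Gamma> p) = Q"
    and T_inv: "\<forall>i\<in>{1..r}. \<forall>p\<in>{1..P}. invertible_mat (Tmat K b (\<Gamma> p) i)"
    and S_carrier: "\<forall>i\<in>{1..r}. \<forall>p\<in>{1..P}. S i p \<in> carrier_mat (K i) (K i)"
    and S_inv: "\<forall>i\<in>{1..r}. \<forall>p\<in>{1..P}.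
                  S i p * Tmat K b (\<Gamma> p) i = 1\<^sub>m (K i) \<and> Tmat K b (\<Gamma> p) i * S i p = 1\<^sub>m (K i)"
    and \<gamma>_pos: "\<gamma> > 0"
    and \<gamma>_bound: "\<forall>i\<in>{1..r}. op_norm (K i) (N i) (cnorm_on {1..L}) (Aop b a {1..L} i) \<le> \<gamma>"
    and diag: "\<forall>i\<in>{1..r}. \<forall>p\<in>{1..P}.
       op_norm (K i) (N i) frob
         (\<lambda>Z. PT (h i) (x i) (Aadj K N b a (\<Gamma> p) i (Aop b a (\<Gamma> p) i (S i p * PT (h i) (x i) Z)))
              - PT (h i) (x i) Z) \<le> 1 / 4"
    and offdiag: "\<forall>j\<in>{1..r}. \<forall>k\<in>{1..r}. \<forall>p\<in>{1..P}. j \<noteq> k \<longrightarrow>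
       op_norm (K k) (N k) frob
         (\<lambda>Z. PT (h j) (x j) (Aadj K N b a (\<Gamma> p) j (Aop b a (\<Gamma> p) k (S k p * PT (h k) (x k) Z))))
         \<le> 1 / (4 * real r)"
  shows "(\<forall>i\<in>{1..r}. \<forall>p\<in>{1..P}.
            frob (outer (cvec (h i)) (cvec (x i)) - PT (h i) (x i) (golf r K N h x b a \<Gamma> S p i))
              = frob (PT (h i) (x i) (golf r K N h x b a \<Gamma> S p i) - outer (cvec (h i)) (cvec (x i)))
          \<and> frob (outer (cvec (h i)) (cvec (x i)) - PT (h i) (x i) (golf r K N h x b a \<Gamma> S p i))
              \<le> 1 / 2 ^ p)
       \<and> (real P \<ge> log 2 (5 * real r * \<gamma>) \<longrightarrow>
           (\<forall>i\<in>{1..r}.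
              frob (PT (h i) (x i) (golf r K N h x b a \<Gamma> S P i) - outer (cvec (h i)) (cvec (x i)))
                \<le> 1 / (5 * real r * \<gamma>)))"
proof -
  interpret golfing_scheme r P K N h x b a \<Gamma> S
  proof
    fix i p assume "i \<in> {1..r}" "p \<in> {1..P}"
    then show "\<forall>l\<in>\<Gamma> p. dim_vec (a i l) = N i" using a_dim part_sub by blast
  qed (use h_dim x_dim h_unit x_unit S_carrier diag offdiag in auto)
  show ?thesis
    unfolding target_def[symmetric]
  proof (intro conjI ballI impI)
    fix i p assume "i \<in> {1..r}" "p \<in> {1..P}"
    then show "frob (target i - PT (h i) (x i) (Y p i)) = frob (PT (h i) (x i) (Y p i) - target i)"
      and "frob (target i - PT (h i) (x i) (Y p i)) \<le> 1 / 2 ^ p"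
      using frob_residual_commute frob_residual_le unfolding residual_def by auto
  next
    fix i assume P: "log 2 (5 * real r * \<gamma>) \<le> real P" and i: "i \<in> {1..r}"
    have pos: "5 * real r * \<gamma> > 0" using \<gamma>_pos i by simp
    then have "1 / 2 ^ P \<le> 1 / (5 * real r * \<gamma>)"
      using P by (intro divide_left_mono) (auto simp: log_le_iff powr_realpow[symmetric])
    then show "frob (PT (h i) (x i) (Y P i) - target i) \<le> 1 / (5 * real r * \<gamma>)"
      using frob_residual_commute[OF i, of P] frob_residual_le[OF order_refl i] by linarith
  qed
qed

end
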